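(* Let $k$ be a field of characteristic $0$ and let $\mathcal L$ be a Lie torus of type $(\Delta,\Lambda)$ over $k$. Suppose $\alpha,\beta\in\Delta^\times$ satisfy $\langle\beta,\alpha^\vee\rangle<0$, and let $0\neq x_\alpha\in\mathcal L_\alpha$ and $0\neq y_\beta\in\mathcal L_\beta$. Then $\mathrm{ad}(x_\alpha)^{-\langle\beta,\alpha^\vee\rangle}\,y_\beta\neq 0$.
   Context: An irreducible finite root system in a finite-dimensional $k$-vector space $\mathcal X$ is a finite subset $\Delta\subset\mathcal X$ with $0\in\Delta$ such that $\Delta^\times:=\Delta\setminus\{0\}$ is an irreducible (possibly non-reduced) finite root system in $\mathcal X$ in the usual sense. Write $Q=\mathrm{span}_{\mathbb Z}(\Delta)$, $\alpha^\vee$ for the coroot of $\alpha\in\Delta^\times$, $\langle\beta,\alpha^\vee\rangle$ for the natural pairing, and $\Delta^\times_{\mathrm{ind}}=\Delta^\times\setminus 2\Delta^\times$. Let $\Lambda$ be a finitely generated free abelian group. A Lie torus of type $(\Delta,\Lambda)$ is a Lie algebra $\mathcal L$ over $k$ with a $Q\times\Lambda$-grading $\mathcal L=\bigoplus_{(\alpha,\lambda)\in Q\times\Lambda}\mathcal L_\alpha^\lambda$ (with $\mathcal L_\alpha:=\bigoplus_\lambda\mathcal L_\alpha^\lambda$ and $\mathcal L^\lambda:=\bigoplus_\alpha\mathcal L_\alpha^\lambda$) such that: (LT1) $\{\alpha\in Q:\mathcal L_\alpha\neq0\}=\Delta$; (LT2)(i) $\mathcal L_\alpha^0\neq 0$ for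 all $\alpha\in\Delta^\times_{\mathrm{ind}}$; (ii) whenever $\alpha\in\Delta^\times$, $\lambda\in\Lambda$ and $\mathcal L_\alpha^\lambda\neq0$, there exist $e\in\mathcal L_\alpha^\lambda$, $f\in\mathcal L_{-\alpha}^{-\lambda}$ with $\mathcal L_\alpha^\lambda=ke$, $\mathcal L_{-\alpha}^{-\lambda}=kf$ and $[[e,f],x]=\langle\beta,\alpha^\vee\rangle x$ for all $x\in\mathcal L_\beta$, $\beta\in Q$; (LT3) $\mathcal L$ is generated as an algebra by the spaces $\mathcal L_\alpha$, $\alpha\in\Delta^\times$; (LT4) $\Lambda$ is generated as a group by $\{\lambda\in\Lambda:\mathcal L^\lambda\neq0\}$. *)

theory Defs
  imports Complex_Main
begin

definition zsmul :: "int \<Rightarrow> 'a::ab_group_add \<Rightarrow> 'a" where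
  "zsmul m x = (if 0 \<le> m then (\<Sum>_\<in>{..<nat m}. x) else - (\<Sum>_\<in>{..<nat (- m)}. x))"

definition zspan :: "'a::ab_group_add set \<Rightarrow> 'a set" where
  "zspan S = {v. \<exists>c :: 'a \<Rightarrow> int. v = (\<Sum>a\<in>S. zsmul (c a) a)}"

definition subgroup_gen :: "'a::ab_group_add set \<Rightarrow> 'a set" where
  "subgroup_gen S = \<Inter>{G. 0 \<in> G \<and> (\<forall>x\<in>G. \<forall>y\<in>G. x + y \<in> G \<and> - x \<in> G) \<and> S \<subseteq> G}"

definition fg_free_abgroup :: "'l::ab_group_add itself \<Rightarrow> bool" where
  "fg_free_abgroup _ \<longleftrightarrow> (\<exists>(n::nat) (b :: nat \<Rightarrow> 'l). \<forall>l::'l.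
      \<exists>!c :: nat \<Rightarrow> int. (\<forall>i\<ge>n. c i = 0) \<and> l = (\<Sum>i<n. zsmul (c i) (b i)))"

definition coroot_cond :: "('k::field \<Rightarrow> 'x::ab_group_add \<Rightarrow> 'x) \<Rightarrow> 'x set \<Rightarrow> 'x \<Rightarrow> ('x \<Rightarrow> 'k) \<Rightarrow> bool" where
  "coroot_cond sX \<Phi> \<alpha> f \<longleftrightarrow> Vector_Spaces.linear sX (*) f \<and> f \<alpha> = 2
     \<and> (\<forall>\<beta>\<in>\<Phi>. \<beta> - sX (f \<beta>) \<alpha> \<in> \<Phi>) \<and> (\<forall>\<beta>\<in>\<Phi>. f \<beta> \<in> \<int>)"

text \<open>(Possibly non-reduced) finite root system in the vector space X (Bourbaki).\<close>
definition root_system :: "('k::field \<Rightarrow> 'x::ab_group_add \<Rightarrow> 'x) \<Rightarrow> 'x set \<Rightarrow> bool" where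
  "root_system sX \<Phi> \<longleftrightarrow> vector_space sX \<and> finite \<Phi> \<and> 0 \<notin> \<Phi> \<and> module.span sX \<Phi> = UNIV
     \<and> (\<forall>\<alpha>\<in>\<Phi>. \<exists>f. coroot_cond sX \<Phi> \<alpha> f)"

text \<open>The coroot (it is unique for a root system).\<close>
definition coroot :: "('k::field \<Rightarrow> 'x::ab_group_add \<Rightarrow> 'x) \<Rightarrow> 'x set \<Rightarrow> 'x \<Rightarrow> ('x \<Rightarrow> 'k)" where
  "coroot sX \<Phi> \<alpha> = (SOME f. coroot_cond sX \<Phi> \<alpha> f)"

definition irreducible_root_system :: "('k::field \<Rightarrow> 'x::ab_group_add \<Rightarrow> 'x) \<Rightarrow> 'x set \<Rightarrow> bool" where
  "irreducible_root_system sX \<Phi> \<longleftrightarrow> root_system sX \<Phi> \<and> \<Phi> \<noteq> {} \<and>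
     \<not> (\<exists>A B. A \<union> B = \<Phi> \<and> A \<inter> B = {} \<and> A \<noteq> {} \<and> B \<noteq> {} \<and>
          (\<forall>a\<in>A. \<forall>b\<in>B. coroot sX \<Phi> a b = 0))"

definition irr_root_system0 :: "('k::field \<Rightarrow> 'x::ab_group_add \<Rightarrow> 'x) \<Rightarrow> 'x set \<Rightarrow> bool" where
  "irr_root_system0 sX \<Delta> \<longleftrightarrow> 0 \<in> \<Delta> \<and> irreducible_root_system sX (\<Delta> - {0})"

definition nonzero_indivisible :: "('k::field \<Rightarrow> 'x::ab_group_add \<Rightarrow> 'x) \<Rightarrow> 'x set \<Rightarrow> 'x set" where
  "nonzero_indivisible sX \<Delta> = (\<Delta> - {0}) - (sX 2) ` (\<Delta> - {0})"

definition lie_algebra :: "('k::field \<Rightarrow> 'L::ab_group_add \<Rightarrow> 'L) \<Rightarrow> ('L \<Rightarrow> 'L \<Rightarrow> 'L) \<Rightarrow> bool" where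
  "lie_algebra sL br \<longleftrightarrow> vector_space sL
     \<and> (\<forall>x. Vector_Spaces.linear sL sL (br x)) \<and> (\<forall>y. Vector_Spaces.linear sL sL (\<lambda>x. br x y))
     \<and> (\<forall>x. br x x = 0)
     \<and> (\<forall>x y z. br x (br y z) + br y (br z x) + br z (br x y) = 0)"

definition lie_generated :: "('k::field \<Rightarrow> 'L::ab_group_add \<Rightarrow> 'L) \<Rightarrow> ('L \<Rightarrow> 'L \<Rightarrow> 'L) \<Rightarrow> 'L set \<Rightarrow> 'L set" where
  "lie_generated sL br S = \<Inter>{M. module.subspace sL M \<and> S \<subseteq> M \<and> (\<forall>x\<in>M. \<forall>y\<in>M. br x y \<in> M)}"

text \<open>Lg a l is the homogeneous component L_a^l.  A (Q x Lambda)-grading: the components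
  are subspaces, zero outside Q, L is their direct sum, and the bracket respects degrees.\<close>
definition lie_graded :: "('k::field \<Rightarrow> 'L::ab_group_add \<Rightarrow> 'L) \<Rightarrow> ('L \<Rightarrow> 'L \<Rightarrow> 'L) \<Rightarrow> 'x::ab_group_add set
     \<Rightarrow> ('x \<Rightarrow> 'l::ab_group_add \<Rightarrow> 'L set) \<Rightarrow> bool" where
  "lie_graded sL br Q Lg \<longleftrightarrow>
     (\<forall>a l. module.subspace sL (Lg a l))
   \<and> (\<forall>a l. a \<notin> Q \<longrightarrow> Lg a l = {0})
   \<and> (\<forall>x. \<exists>!c :: 'x \<Rightarrow> 'l \<Rightarrow> 'L. finite {p. c (fst p) (snd p) \<noteq> 0}
          \<and> (\<forall>a l. c a l \<in> Lg a l)
          \<and> x = (\<Sum>p\<in>{p. c (fst p) (snd p) \<noteq> 0}. c (fst p) (snd p)))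
   \<and> (\<forall>a l b m. \<forall>x\<in>Lg a l. \<forall>y\<in>Lg b m. br x y \<in> Lg (a + b) (l + m))"

definition Lroot :: "('k::field \<Rightarrow> 'L::ab_group_add \<Rightarrow> 'L) \<Rightarrow> ('x \<Rightarrow> 'l \<Rightarrow> 'L set) \<Rightarrow> 'x \<Rightarrow> 'L set" where
  "Lroot sL Lg a = module.span sL (\<Union>l. Lg a l)"

definition Ldeg :: "('k::field \<Rightarrow> 'L::ab_group_add \<Rightarrow> 'L) \<Rightarrow> ('x \<Rightarrow> 'l \<Rightarrow> 'L set) \<Rightarrow> 'l \<Rightarrow> 'L set" where
  "Ldeg sL Lg l = module.span sL (\<Union>a. Lg a l)"

definition lie_torus :: "('k::field_char_0 \<Rightarrow> 'x::ab_group_add \<Rightarrow> 'x) \<Rightarrow> ('k \<Rightarrow> 'L::ab_group_add \<Rightarrow> 'L)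
     \<Rightarrow> ('L \<Rightarrow> 'L \<Rightarrow> 'L) \<Rightarrow> 'x set \<Rightarrow> ('x \<Rightarrow> 'l::ab_group_add \<Rightarrow> 'L set) \<Rightarrow> bool" where
  "lie_torus sX sL br \<Delta> Lg \<longleftrightarrow>
     irr_root_system0 sX \<Delta> \<and> fg_free_abgroup TYPE('l) \<and> lie_algebra sL br
   \<and> lie_graded sL br (zspan \<Delta>) Lg
   \<comment> \<open>LT1\<close>
   \<and> {a \<in> zspan \<Delta>. Lroot sL Lg a \<noteq> {0}} = \<Delta>
   \<comment> \<open>LT2 (i)\<close>
   \<and> (\<forall>a\<in>nonzero_indivisible sX \<Delta>. Lg a 0 \<noteq> {0})
   \<comment> \<open>LT2 (ii)\<close>
   \<and> (\<forall>a\<in>\<Delta> - {0}. \<forall>l. Lg a l \<noteq> {0} \<longrightarrow>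
        (\<exists>e\<in>Lg a l. \<exists>f\<in>Lg (- a) (- l).
            Lg a l = range (\<lambda>c. sL c e) \<and> Lg (- a) (- l) = range (\<lambda>c. sL c f)
          \<and> (\<forall>b\<in>zspan \<Delta>. \<forall>x\<in>Lroot sL Lg b.
                br (br e f) x = sL (coroot sX (\<Delta> - {0}) a b) x)))
   \<comment> \<open>LT3\<close>
   \<and> lie_generated sL br (\<Union>a\<in>\<Delta> - {0}. Lroot sL Lg a) = UNIV
   \<comment> \<open>LT4\<close>
   \<and> subgroup_gen {l. Ldeg sL Lg l \<noteq> {0}} = UNIV"

end

theory Submission
  imports Defs "HOL-Library.Fun_Lexorder"
begin

text \<open>Since \<open>\<Lambda>\<close> is free of finite rank, it carries a total order compatible with addition.
  For the top \<open>\<Lambda>\<close>-components \<open>x\<^sub>\<kappa>\<close> of \<open>x\<^sub>\<alpha>\<close> and \<open>y\<^sub>\<mu>\<close> of \<open>y\<^sub>\<beta>\<close>, the element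
  \<open>ad(x\<^sub>\<kappa>)\<^sup>j y\<^sub>\<mu>\<close> is the top component of \<open>ad(x\<^sub>\<alpha>)\<^sup>j y\<^sub>\<beta>\<close>, so it suffices to treat a
  homogeneous \<open>x\<^sub>\<alpha> \<in> \<L>\<^sub>\<alpha>\<^sup>\<kappa>\<close>. By (LT2)(ii) it is a multiple of the \<open>e\<close> of an
  \<open>sl\<^sub>2\<close>-triple \<open>(e, f, [e,f])\<close> in which \<open>[e,f]\<close> acts on \<open>\<L>\<^sub>\<beta>\<close> by \<open>n = \<langle>\<beta>,\<alpha>\<^sup>\<or>\<rangle> < 0\<close>,
  and \<open>ad f\<close> is locally nilpotent because \<open>\<Delta>\<close> is finite. The elementary \<open>sl\<^sub>2\<close>-computation
  then shows that \<open>ad(e)\<^sup>-\<^sup>n\<close> does not kill a nonzero vector of weight \<open>n\<close>.\<close>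

lemma zsmul_add_one: "zsmul (m + 1) x = zsmul m x + (x::'a::ab_group_add)"
proof -
  consider "0 \<le> m" | "m = -1" | "m < -1" by linarith
  then show ?thesis
  proof cases
    case 1
    then have "nat (m + 1) = Suc (nat m)" by simp
    with 1 show ?thesis by (simp add: zsmul_def)
  next
    case 3
    then have "nat (- m) = Suc (nat (- (m + 1)))" by simp
    with 3 show ?thesis by (simp add: zsmul_def)
  qed (simp add: zsmul_def)
qed

lemma zsmul_add: "zsmul (a + b) x = zsmul a x + zsmul b (x::'a::ab_group_add)"
proof (induction b rule: int_induct[where k = 0])
  case base
  show ?case by (simp add: zsmul_def)
next
  case (step1 i)
  then show ?case using zsmul_add_one[of "a + i" x] zsmul_add_one[of i x] by (simp add: add.assoc)
next
  case (step2 i)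
  then show ?case using zsmul_add_one[of "a + (i - 1)" x] zsmul_add_one[of "i - 1" x]
    by (simp add: algebra_simps)
qed

lemma fg_free_abgroup_coordinates:
  assumes "fg_free_abgroup TYPE('l)"
  obtains co :: "'l::ab_group_add \<Rightarrow> nat \<Rightarrow> int"
  where "inj co" and "\<And>l l'. co (l + l') = (\<lambda>i. co l i + co l' i)"
proof -
  obtain n and b :: "nat \<Rightarrow> 'l" where unique: "\<And>l. \<exists>!c :: nat \<Rightarrow> int.
      (\<forall>i\<ge>n. c i = 0) \<and> l = (\<Sum>i<n. zsmul (c i) (b i))"
    using assms unfolding fg_free_abgroup_def by blast
  define is_coord where "is_coord l c \<longleftrightarrow> (\<forall>i\<ge>n. c i = 0) \<and> l = (\<Sum>i<n. zsmul (c i) (b i))"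
    for l c
  define co where "co l = (THE c. is_coord l c)" for l
  have co: "is_coord l (co l)" for l
    unfolding co_def is_coord_def using unique by (rule theI')
  have "inj co"
    by (rule injI) (metis co is_coord_def)
  moreover have "co (l + l') = (\<lambda>i. co l i + co l' i)" for l l'
  proof -
    have "is_coord (l + l') (\<lambda>i. co l i + co l' i)"
      using co[of l] co[of l'] by (simp add: is_coord_def zsmul_add sum.distrib)
    then show ?thesis
      unfolding co_def is_coord_def by (rule the1_equality[OF unique])
  qed
  ultimately show thesis by (rule that)
qed

lemma less_fun_total:
  fixes f g :: "nat \<Rightarrow> 'b::linorder"
  assumes "f \<noteq> g"
  shows "less_fun f g \<or> less_fun g f"
proof -
  obtain k where k: "f k \<noteq> g k" and below: "\<And>k'. k' < k \<Longrightarrow> f k' = g k'"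
    using assms exists_least_iff[of "\<lambda>k. f k \<noteq> g k"] by (metis ext)
  then show ?thesis
    by (cases "f k < g k") (auto intro!: less_funI simp: not_less_iff_gr_or_eq)
qed

locale lie_alg =
  fixes sL :: "'k::field \<Rightarrow> 'L::ab_group_add \<Rightarrow> 'L" and br :: "'L \<Rightarrow> 'L \<Rightarrow> 'L"
  assumes lie_algebra: "lie_algebra sL br"
begin

sublocale L: vector_space sL
  using lie_algebra unfolding lie_algebra_def by blast

lemma br_right_hom: "module_hom sL sL (br x)"
  using lie_algebra unfolding lie_algebra_def module_hom_iff_linear by blast

lemma br_left_hom: "module_hom sL sL (\<lambda>x. br x y)"
  using lie_algebra unfolding lie_algebra_def module_hom_iff_linear by blast

lemmas br_add_left = module_hom.add[OF br_left_hom]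
  and br_add_right = module_hom.add[OF br_right_hom]
  and br_scale_left = module_hom.scale[OF br_left_hom]
  and br_scale_right = module_hom.scale[OF br_right_hom]
  and br_zero_left [simp] = module_hom.zero[OF br_left_hom]
  and br_zero_right [simp] = module_hom.zero[OF br_right_hom]
  and br_sum_left = module_hom.sum[OF br_left_hom]
  and br_sum_right = module_hom.sum[OF br_right_hom]

lemma br_anticomm: "br x y = - br y x"
proof -
  have "br (x + y) (x + y) = 0" "br x x = 0" "br y y = 0"
    using lie_algebra unfolding lie_algebra_def by blast+
  then have "br x y + br y x = 0" by (simp add: br_add_left br_add_right add.commute)
  then show ?thesis by (simp add: eq_neg_iff_add_eq_0)
qed

lemma jacobi_leibniz: "br x (br y z) = br (br x y) z + br y (br x z)"
proof -
  have "br x (br y z) + br y (br z x) + br z (br x y) = 0"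
    using lie_algebra unfolding lie_algebra_def by blast
  moreover have "br y (br z x) = - br y (br x z)"
    using br_anticomm[of z x] module_hom.neg[OF br_right_hom] by simp
  moreover have "br z (br x y) = - br (br x y) z"
    by (rule br_anticomm)
  ultimately show ?thesis by (simp add: algebra_simps)
qed

lemma ad_power_scale: "(br (sL s x) ^^ m) y = sL (s ^ m) ((br x ^^ m) y)"
  by (induction m) (simp_all add: br_scale_left br_scale_right mult.commute)

lemma eigenvector_br:
  assumes "br h u = sL a u" and "br h v = sL b v"
  shows "br h (br u v) = sL (a + b) (br u v)"
  using jacobi_leibniz[of h u v]
  by (simp add: assms br_scale_left br_scale_right L.scale_left_distrib)

lemma eigenvector_ad_power:
  assumes "br h x = sL a x" and "br h v = sL b v"
  shows "br h ((br x ^^ k) v) = sL (b + of_nat k * a) ((br x ^^ k) v)"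
proof (induction k)
  case (Suc k)
  from eigenvector_br[OF assms(1) this] show ?case by (simp add: algebra_simps)
qed (simp add: assms)

lemma sl2_raise_lower_commutator:
  assumes he: "br (br e f) e = sL 2 e" and hv: "br (br e f) v = sL b v"
  shows "(br e ^^ Suc k) (br f v)
    = br f ((br e ^^ Suc k) v) + sL (of_nat (Suc k) * (b + of_nat k)) ((br e ^^ k) v)"
proof (induction k)
  case 0
  show ?case using jacobi_leibniz[of e f v] by (simp add: hv add.commute)
next
  case (Suc k)
  let ?W = "(br e ^^ Suc k) v"
  have hW: "br (br e f) ?W = sL (b + 2 * of_nat (Suc k)) ?W"
    using eigenvector_ad_power[OF he hv, of "Suc k"] by (simp add: mult.commute)
  have "(br e ^^ Suc (Suc k)) (br f v)
      = br e (br f ?W) + sL (of_nat (Suc k) * (b + of_nat k)) ?W"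
    using Suc by (simp add: br_add_right br_scale_right)
  also have "br e (br f ?W) = sL (b + 2 * of_nat (Suc k)) ?W + br f (br e ?W)"
    using jacobi_leibniz[of e f ?W] hW by simp
  finally show ?case
    by (simp add: algebra_simps flip: L.scale_left_distrib)
qed

end

locale lie_alg_char_0 = lie_alg sL br
  for sL :: "'k::field_char_0 \<Rightarrow> 'L::ab_group_add \<Rightarrow> 'L" and br
begin

text \<open>Induction on the nilpotency index of \<open>ad f\<close> at \<open>v\<close>, passing to \<open>[f, v]\<close> of weight
  \<open>p - 2\<close>; the commutator formula above links \<open>ad(e)\<^sup>k\<close> on \<open>v\<close> and on \<open>[f, v]\<close>.\<close>
lemma sl2_raising_bound:
  assumes he: "br (br e f) e = sL 2 e" and hf: "br (br e f) f = sL (- 2) f"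
  shows "br (br e f) v = sL (of_int p) v \<Longrightarrow> v \<noteq> 0 \<Longrightarrow> (br f ^^ N) v = 0
    \<Longrightarrow> (br e ^^ k) v = 0 \<Longrightarrow> 0 < p + int k"
proof (induction N arbitrary: v p k)
  case 0
  then show ?case by simp
next
  case (Suc N)
  note IH = Suc.IH and hv = Suc.prems(1) and v = Suc.prems(2)
  define w where "w = br f v"
  have hw: "br (br e f) w = sL (of_int (p - 2)) w"
    using eigenvector_br[OF hf hv] by (simp add: w_def)
  have fw: "(br f ^^ N) w = 0"
    using Suc.prems(3) by (simp add: w_def funpow_Suc_right del: funpow.simps)
  have commutator: "(br e ^^ Suc j) w = br f ((br e ^^ Suc j) v) + sL (of_int (int (Suc j) * (p + int j))) ((br e ^^ j) v)" for j
    using sl2_raise_lower_commutator[OF he hv, of j] by (simp add: w_def)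
  from Suc.prems(4) show ?case
  proof (induction k)
    case 0
    then show ?case using v by simp
  next
    case (Suc k)
    show ?case
    proof (cases "w = 0")
      case False
      have "(br e ^^ Suc (Suc k)) w = 0"
        using commutator[of "Suc k"] Suc.prems by simp
      from IH[OF hw False fw this] show ?thesis by simp
    next
      case True
      then have "(br e ^^ Suc k) w = 0" by (induction k) simp_all
      then have "sL (of_int (int (Suc k) * (p + int k))) ((br e ^^ k) v) = 0"
        using commutator[of k] Suc.prems by simp
      then have "int (Suc k) * (p + int k) = 0 \<or> (br e ^^ k) v = 0"
        by (simp only: L.scale_eq_0_iff of_int_eq_0_iff)
      then have "p + int k = 0 \<or> (br e ^^ k) v = 0" by simp
      then show ?thesis using Suc.IH by linarith
    qed
  qed
qed

lemma sl2_raising_nonzero: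
  assumes "br (br e f) e = sL 2 e" and "br (br e f) f = sL (- 2) f"
    and "br (br e f) v = sL (of_int p) v" and "v \<noteq> 0" and "(br f ^^ N) v = 0" and "p < 0"
  shows "(br e ^^ nat (- p)) v \<noteq> 0"
  using sl2_raising_bound[OF assms(1-5), of "nat (- p)"] \<open>p < 0\<close> by linarith

end


locale graded_lie_alg = lie_alg sL br
  for sL :: "'k::field \<Rightarrow> 'L::ab_group_add \<Rightarrow> 'L" and br +
  fixes Q :: "'x::ab_group_add set" and Lg :: "'x \<Rightarrow> 'l::ab_group_add \<Rightarrow> 'L set"
  assumes graded: "lie_graded sL br Q Lg"
begin

lemma subspace_Lg: "L.subspace (Lg a l)"
  using graded unfolding lie_graded_def by blast

lemma br_Lg: "x \<in> Lg a l \<Longrightarrow> y \<in> Lg b m \<Longrightarrow> br x y \<in> Lg (a + b) (l + m)"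
  using graded unfolding lie_graded_def by blast

lemma Lroot_outside: "a \<notin> Q \<Longrightarrow> Lroot sL Lg a = {0}"
proof -
  assume "a \<notin> Q"
  then have "Lg a l = {0}" for l
    using graded unfolding lie_graded_def by blast
  then have "Lroot sL Lg a \<subseteq> {0}"
    unfolding Lroot_def by (intro L.span_minimal) auto
  then show ?thesis using L.span_zero unfolding Lroot_def by blast
qed

lemma Lg_subset_Lroot: "Lg a l \<subseteq> Lroot sL Lg a"
  unfolding Lroot_def by (blast intro: L.span_base)

definition is_decomposition :: "'L \<Rightarrow> ('x \<Rightarrow> 'l \<Rightarrow> 'L) \<Rightarrow> bool" where
  "is_decomposition x c \<longleftrightarrow> finite {p. c (fst p) (snd p) \<noteq> 0} \<and> (\<forall>a l. c a l \<in> Lg a l)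
     \<and> x = (\<Sum>p\<in>{p. c (fst p) (snd p) \<noteq> 0}. c (fst p) (snd p))"

definition hcomp :: "'L \<Rightarrow> 'x \<Rightarrow> 'l \<Rightarrow> 'L" where
  "hcomp x = (THE c. is_decomposition x c)"

definition degrees :: "'L \<Rightarrow> 'x \<Rightarrow> 'l set" where
  "degrees x a = {l. hcomp x a l \<noteq> 0}"

lemma ex1_decomposition: "\<exists>!c. is_decomposition x c"
  using graded by (simp add: lie_graded_def is_decomposition_def)

lemma hcomp_decomposition: "is_decomposition x (hcomp x)"
  unfolding hcomp_def using ex1_decomposition by (rule theI')

lemma hcomp_in_Lg: "hcomp x a l \<in> Lg a l"
  using hcomp_decomposition unfolding is_decomposition_def by blast

lemma finite_hcomp_support: "finite {p. hcomp x (fst p) (snd p) \<noteq> 0}"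
  using hcomp_decomposition unfolding is_decomposition_def by blast

lemma sum_hcomp: "x = (\<Sum>p\<in>{p. hcomp x (fst p) (snd p) \<noteq> 0}. hcomp x (fst p) (snd p))"
  using hcomp_decomposition unfolding is_decomposition_def by blast

lemma hcomp_eq:
  assumes F: "finite F" and d: "\<And>p. p \<in> F \<Longrightarrow> d p \<in> Lg (fst p) (snd p)"
    and x: "x = (\<Sum>p\<in>F. d p)"
  shows "hcomp x a l = (if (a, l) \<in> F then d (a, l) else 0)"
proof -
  define c where "c a l = (if (a, l) \<in> F then d (a, l) else 0)" for a l
  have supp: "{p. c (fst p) (snd p) \<noteq> 0} \<subseteq> F" by (auto simp: c_def split: if_splits)
  have "is_decomposition x c" unfolding is_decomposition_def
  proof (intro conjI allI)
    show "finite {p. c (fst p) (snd p) \<noteq> 0}" using supp F by (rule finite_subset)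
    show "c a l \<in> Lg a l" for a l using d[of "(a, l)"] L.subspace_0[OF subspace_Lg] by (simp add: c_def)
    have "(\<Sum>p\<in>{p. c (fst p) (snd p) \<noteq> 0}. c (fst p) (snd p)) = (\<Sum>p\<in>F. c (fst p) (snd p))"
      using F supp by (intro sum.mono_neutral_left) auto
    then show "x = (\<Sum>p\<in>{p. c (fst p) (snd p) \<noteq> 0}. c (fst p) (snd p))"
      using x by (simp add: c_def)
  qed
  then have "hcomp x = c" unfolding hcomp_def by (rule the1_equality[OF ex1_decomposition])
  then show ?thesis by (simp add: c_def)
qed

lemma hcomp_homogeneous: "z \<in> Lg b m \<Longrightarrow> hcomp z a l = (if a = b \<and> l = m then z else 0)"
  using hcomp_eq[of "{(b, m)}" "\<lambda>_. z" z a l] by auto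

lemma hcomp_hom: "module_hom sL sL (\<lambda>x. hcomp x a l)"
  unfolding module_hom_iff
proof (intro conjI allI L.module_axioms)
  fix x y
  define F where "F = {p. hcomp x (fst p) (snd p) \<noteq> 0} \<union> {p. hcomp y (fst p) (snd p) \<noteq> 0}"
  have F: "finite F" using finite_hcomp_support by (simp add: F_def)
  have "v = (\<Sum>p\<in>F. hcomp v (fst p) (snd p))" if "v = x \<or> v = y" for v
    by (subst sum_hcomp[of v], rule sum.mono_neutral_left) (use F that in \<open>auto simp: F_def\<close>)
  then have "x + y = (\<Sum>p\<in>F. hcomp x (fst p) (snd p) + hcomp y (fst p) (snd p))"
    by (simp add: sum.distrib)
  from hcomp_eq[OF F _ this]
  show "hcomp (x + y) a l = hcomp x a l + hcomp y a l"
    by (auto simp: F_def L.subspace_add[OF subspace_Lg] hcomp_in_Lg)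
next
  fix s x
  define F where "F = {p. hcomp x (fst p) (snd p) \<noteq> 0}"
  have F: "finite F" using finite_hcomp_support by (simp add: F_def)
  have "sL s x = (\<Sum>p\<in>F. sL s (hcomp x (fst p) (snd p)))"
    by (subst sum_hcomp[of x]) (simp add: F_def L.scale_sum_right)
  from hcomp_eq[OF F _ this]
  show "hcomp (sL s x) a l = sL s (hcomp x a l)"
    by (auto simp: F_def L.subspace_scale[OF subspace_Lg] hcomp_in_Lg)
qed

lemmas hcomp_zero [simp] = module_hom.zero[OF hcomp_hom]
  and hcomp_sum = module_hom.sum[OF hcomp_hom]

lemma finite_degrees: "finite (degrees x a)"
proof -
  have "degrees x a \<subseteq> snd ` {p. hcomp x (fst p) (snd p) \<noteq> 0}"
  proof
    fix l assume "l \<in> degrees x a"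
    then show "l \<in> snd ` {p. hcomp x (fst p) (snd p) \<noteq> 0}"
      by (intro image_eqI[of l snd "(a, l)"]) (simp_all add: degrees_def)
  qed
  then show ?thesis by (rule finite_subset) (simp add: finite_hcomp_support)
qed

lemma hcomp_Lroot_other_root:
  assumes "x \<in> Lroot sL Lg \<alpha>" and "a \<noteq> \<alpha>"
  shows "hcomp x a l = 0"
proof -
  have "Lroot sL Lg \<alpha> \<subseteq> {x. hcomp x a l = 0}"
    unfolding Lroot_def
  proof (rule L.span_minimal)
    show "(\<Union>m. Lg \<alpha> m) \<subseteq> {x. hcomp x a l = 0}"
      using \<open>a \<noteq> \<alpha>\<close> hcomp_homogeneous by auto
    show "L.subspace {x. hcomp x a l = 0}"
      by (rule L.subspaceI)
        (simp_all add: module_hom.add[OF hcomp_hom] module_hom.scale[OF hcomp_hom])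
  qed
  then show ?thesis using assms(1) by blast
qed

lemma Lroot_expansion:
  assumes x: "x \<in> Lroot sL Lg \<alpha>" and S: "finite S" "degrees x \<alpha> \<subseteq> S"
  shows "x = (\<Sum>l\<in>S. hcomp x \<alpha> l)"
proof -
  have "x = (\<Sum>p\<in>{p. hcomp x (fst p) (snd p) \<noteq> 0}. hcomp x (fst p) (snd p))"
    by (rule sum_hcomp)
  also have "\<dots> = (\<Sum>p\<in>Pair \<alpha> ` S. hcomp x (fst p) (snd p))"
    using S hcomp_Lroot_other_root[OF x]
    by (intro sum.mono_neutral_left) (force simp: degrees_def)+
  also have "\<dots> = (\<Sum>l\<in>S. hcomp x \<alpha> l)"
    by (simp add: sum.reindex inj_on_def)
  finally show ?thesis .
qed

lemma br_expansion:
  assumes "x \<in> Lroot sL Lg \<alpha>" and "z \<in> Lroot sL Lg \<gamma>"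
  shows "br x z = (\<Sum>q\<in>degrees x \<alpha> \<times> degrees z \<gamma>. br (hcomp x \<alpha> (fst q)) (hcomp z \<gamma> (snd q)))"
proof -
  have "br x z = br (\<Sum>l\<in>degrees x \<alpha>. hcomp x \<alpha> l) (\<Sum>m\<in>degrees z \<gamma>. hcomp z \<gamma> m)"
    using assms by (simp flip: Lroot_expansion add: finite_degrees)
  then show ?thesis
    unfolding br_sum_left unfolding br_sum_right sum.cartesian_product by (simp add: case_prod_beta')
qed

lemma br_Lroot:
  assumes "x \<in> Lroot sL Lg \<alpha>" and "z \<in> Lroot sL Lg \<gamma>"
  shows "br x z \<in> Lroot sL Lg (\<alpha> + \<gamma>)"
proof -
  have "br (hcomp x \<alpha> l) (hcomp z \<gamma> m) \<in> Lroot sL Lg (\<alpha> + \<gamma>)" for l m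
    using br_Lg[OF hcomp_in_Lg hcomp_in_Lg] Lg_subset_Lroot by blast
  then show ?thesis
    unfolding br_expansion[OF assms] Lroot_def by (blast intro: L.span_sum)
qed

lemma ad_power_Lroot:
  "x \<in> Lroot sL Lg \<alpha> \<Longrightarrow> y \<in> Lroot sL Lg \<beta> \<Longrightarrow> (br x ^^ j) y \<in> Lroot sL Lg (((+) \<alpha> ^^ j) \<beta>)"
  by (induction j) (simp_all add: br_Lroot)

lemma hcomp_br:
  assumes "x \<in> Lroot sL Lg \<alpha>" and "z \<in> Lroot sL Lg \<gamma>"
  shows "hcomp (br x z) (\<alpha> + \<gamma>) \<nu> = (\<Sum>q\<in>degrees x \<alpha> \<times> degrees z \<gamma>.
     if fst q + snd q = \<nu> then br (hcomp x \<alpha> (fst q)) (hcomp z \<gamma> (snd q)) else 0)"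
proof -
  have homogeneous: "br (hcomp x \<alpha> l) (hcomp z \<gamma> m) \<in> Lg (\<alpha> + \<gamma>) (l + m)" for l m
    by (rule br_Lg[OF hcomp_in_Lg hcomp_in_Lg])
  show ?thesis
    unfolding br_expansion[OF assms] hcomp_sum
    by (intro sum.cong refl) (auto simp: hcomp_homogeneous[OF homogeneous])
qed

lemma degrees_nonempty: "x \<in> Lroot sL Lg \<alpha> \<Longrightarrow> x \<noteq> 0 \<Longrightarrow> degrees x \<alpha> \<noteq> {}"
  using Lroot_expansion[of x \<alpha> "{}"] by auto

end


text \<open>A free abelian group of finite rank embeds into \<open>\<int>\<^sup>(\<^sup>\<nat>\<^sup>)\<close>, whose lexicographic order is
  a total order compatible with addition; \<open>co\<close> is such an embedding.\<close>
locale lex_graded_lie_alg = graded_lie_alg sL br Q Lg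
  for sL :: "'k::field \<Rightarrow> 'L::ab_group_add \<Rightarrow> 'L" and br Q
    and Lg :: "'x::ab_group_add \<Rightarrow> 'l::ab_group_add \<Rightarrow> 'L set" +
  fixes co :: "'l \<Rightarrow> nat \<Rightarrow> int"
  assumes inj_co: "inj co" and co_add: "\<And>l l'. co (l + l') = (\<lambda>i. co l i + co l' i)"
begin

definition deg_less :: "'l \<Rightarrow> 'l \<Rightarrow> bool" (infix "\<prec>" 50) where
  "l \<prec> l' \<longleftrightarrow> less_fun (co l) (co l')"

abbreviation deg_le :: "'l \<Rightarrow> 'l \<Rightarrow> bool" (infix "\<preceq>" 50) where
  "l \<preceq> l' \<equiv> l \<prec> l' \<or> l = l'"

sublocale deg: linorder deg_le deg_less
proof
  have total: "l \<prec> l' \<or> l = l' \<or> l' \<prec> l" for l l'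
    using less_fun_total[of "co l" "co l'"] inj_co by (auto simp: deg_less_def inj_eq)
  show "l \<prec> l' \<longleftrightarrow> l \<preceq> l' \<and> \<not> l' \<preceq> l" for l l'
    by (auto simp: deg_less_def less_fun_irrefl dest: less_fun_asym)
  show "l \<preceq> l' \<Longrightarrow> l' \<preceq> l'' \<Longrightarrow> l \<preceq> l''" for l l' l''
    by (auto simp: deg_less_def intro: less_fun_trans)
  show "l \<preceq> l' \<Longrightarrow> l' \<preceq> l \<Longrightarrow> l = l'" for l l'
    by (auto simp: deg_less_def dest: less_fun_asym)
  show "l \<preceq> l" "l \<preceq> l' \<or> l' \<preceq> l" for l l'
    using total by blast+
qed

lemma deg_less_add: "l \<prec> l' \<Longrightarrow> l + t \<prec> l' + t"
  by (auto simp: deg_less_def co_add less_fun_def)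

lemma deg_add_mono: "a \<preceq> b \<Longrightarrow> c \<preceq> d \<Longrightarrow> a + c \<prec> b + d \<or> (a = b \<and> c = d)"
  using deg_less_add[of a b c] deg_less_add[of c d b] deg.less_trans by (auto simp: add.commute)

lemma leading_hcomp_br:
  assumes x: "x \<in> Lroot sL Lg \<alpha>" and z: "z \<in> Lroot sL Lg \<gamma>"
    and bx: "\<forall>l\<in>degrees x \<alpha>. l \<preceq> \<kappa>" and bz: "\<forall>m\<in>degrees z \<gamma>. m \<preceq> \<mu>"
  shows "hcomp (br x z) (\<alpha> + \<gamma>) (\<kappa> + \<mu>) = br (hcomp x \<alpha> \<kappa>) (hcomp z \<gamma> \<mu>)"
    and "\<forall>\<nu>\<in>degrees (br x z) (\<alpha> + \<gamma>). \<nu> \<preceq> \<kappa> + \<mu>"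
proof -
  let ?D = "degrees x \<alpha> \<times> degrees z \<gamma>"
  have mono: "fst q + snd q \<prec> \<kappa> + \<mu> \<or> q = (\<kappa>, \<mu>)" if "q \<in> ?D" for q
    using that bx bz deg_add_mono by (cases q) auto
  have exact: "fst q + snd q = \<kappa> + \<mu> \<longleftrightarrow> q = (\<kappa>, \<mu>)" if "q \<in> ?D" for q
    using mono[OF that] deg.less_irrefl by (cases q) auto
  have "hcomp (br x z) (\<alpha> + \<gamma>) (\<kappa> + \<mu>)
      = (\<Sum>q\<in>?D. if q = (\<kappa>, \<mu>) then br (hcomp x \<alpha> \<kappa>) (hcomp z \<gamma> \<mu>) else 0)"
    unfolding hcomp_br[OF x z] by (intro sum.cong refl) (use exact in auto)
  also have "\<dots> = br (hcomp x \<alpha> \<kappa>) (hcomp z \<gamma> \<mu>)"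
    by (simp add: finite_degrees) (auto simp: degrees_def)
  finally show "hcomp (br x z) (\<alpha> + \<gamma>) (\<kappa> + \<mu>) = br (hcomp x \<alpha> \<kappa>) (hcomp z \<gamma> \<mu>)" .
  have "hcomp (br x z) (\<alpha> + \<gamma>) \<nu> = 0" if above: "\<kappa> + \<mu> \<prec> \<nu>" for \<nu>
  proof -
    have "fst q + snd q \<noteq> \<nu>" if "q \<in> ?D" for q
      using mono[OF that] above deg.less_asym by (cases q) auto
    then show ?thesis
      unfolding hcomp_br[OF x z] by (intro sum.neutral ballI) simp
  qed
  then show "\<forall>\<nu>\<in>degrees (br x z) (\<alpha> + \<gamma>). \<nu> \<preceq> \<kappa> + \<mu>"
    by (auto simp: degrees_def deg.not_less[symmetric])
qed

lemma leading_hcomp_ad_power: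
  assumes x: "x \<in> Lroot sL Lg \<alpha>" and y: "y \<in> Lroot sL Lg \<beta>"
    and bx: "\<forall>l\<in>degrees x \<alpha>. l \<preceq> \<kappa>" and "\<forall>m\<in>degrees y \<beta>. m \<preceq> \<mu>"
  shows "hcomp ((br x ^^ j) y) (((+) \<alpha> ^^ j) \<beta>) (((+) \<kappa> ^^ j) \<mu>) = (br (hcomp x \<alpha> \<kappa>) ^^ j) (hcomp y \<beta> \<mu>)
    \<and> (\<forall>\<nu>\<in>degrees ((br x ^^ j) y) (((+) \<alpha> ^^ j) \<beta>). \<nu> \<preceq> ((+) \<kappa> ^^ j) \<mu>)"
proof (induction j)
  case 0
  show ?case using assms(4) by simp
next
  case (Suc j)
  with leading_hcomp_br[OF x ad_power_Lroot[OF x y] bx, of j] show ?case by simp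
qed

lemma exists_leading_degree:
  assumes "x \<in> Lroot sL Lg \<alpha>" and "x \<noteq> 0"
  obtains \<kappa> where "hcomp x \<alpha> \<kappa> \<noteq> 0" and "\<forall>l\<in>degrees x \<alpha>. l \<preceq> \<kappa>"
proof
  show "hcomp x \<alpha> (deg.Max (degrees x \<alpha>)) \<noteq> 0"
    using deg.Max_in[OF finite_degrees degrees_nonempty[OF assms]] by (simp add: degrees_def)
  show "\<forall>l\<in>degrees x \<alpha>. l \<preceq> deg.Max (degrees x \<alpha>)"
    using deg.Max_ge[OF finite_degrees] by blast
qed

end


lemma (in lex_graded_lie_alg) leading_components:
  assumes x: "x \<in> Lroot sL Lg \<alpha>" "x \<noteq> 0" and y: "y \<in> Lroot sL Lg \<beta>" "y \<noteq> 0"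
  obtains \<kappa> \<mu> where "hcomp x \<alpha> \<kappa> \<noteq> 0" and "hcomp y \<beta> \<mu> \<noteq> 0"
    and "\<And>j. (br (hcomp x \<alpha> \<kappa>) ^^ j) (hcomp y \<beta> \<mu>) \<noteq> 0 \<Longrightarrow> (br x ^^ j) y \<noteq> 0"
proof -
  obtain \<kappa> where \<kappa>: "hcomp x \<alpha> \<kappa> \<noteq> 0" "\<forall>l\<in>degrees x \<alpha>. l \<preceq> \<kappa>"
    using exists_leading_degree[OF x] .
  obtain \<mu> where \<mu>: "hcomp y \<beta> \<mu> \<noteq> 0" "\<forall>m\<in>degrees y \<beta>. m \<preceq> \<mu>"
    using exists_leading_degree[OF y] .
  show thesis
  proof (rule that[OF \<kappa>(1) \<mu>(1)])
    fix j
    show "(br (hcomp x \<alpha> \<kappa>) ^^ j) (hcomp y \<beta> \<mu>) \<noteq> 0 \<Longrightarrow> (br x ^^ j) y \<noteq> 0"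
      using leading_hcomp_ad_power[OF x(1) y(1) \<kappa>(2) \<mu>(2), of j] by auto
  qed
qed

lemma (in graded_lie_alg) exists_leading_components:
  assumes "fg_free_abgroup TYPE('l)"
    and x: "x \<in> Lroot sL Lg \<alpha>" "x \<noteq> 0" and y: "y \<in> Lroot sL Lg \<beta>" "y \<noteq> 0"
  obtains \<kappa> \<mu> where "hcomp x \<alpha> \<kappa> \<noteq> 0" and "hcomp y \<beta> \<mu> \<noteq> 0"
    and "\<And>j. (br (hcomp x \<alpha> \<kappa>) ^^ j) (hcomp y \<beta> \<mu>) \<noteq> 0 \<Longrightarrow> (br x ^^ j) y \<noteq> 0"
proof -
  obtain co :: "'l \<Rightarrow> nat \<Rightarrow> int" where "inj co" and "\<And>l l'. co (l + l') = (\<lambda>i. co l i + co l' i)"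
    using fg_free_abgroup_coordinates[OF assms(1)] by blast
  then interpret lex_graded_lie_alg sL br Q Lg co
    by unfold_locales
  from leading_components[OF x y] that show thesis .
qed

locale lie_torus_struct =
  fixes sX :: "'k::field_char_0 \<Rightarrow> 'x::ab_group_add \<Rightarrow> 'x"
    and sL :: "'k \<Rightarrow> 'L::ab_group_add \<Rightarrow> 'L" and br :: "'L \<Rightarrow> 'L \<Rightarrow> 'L"
    and \<Delta> :: "'x set" and Lg :: "'x \<Rightarrow> 'l::ab_group_add \<Rightarrow> 'L set"
  assumes lie_torus: "lie_torus sX sL br \<Delta> Lg"
begin

sublocale graded_lie_alg sL br "zspan \<Delta>" Lg
  using lie_torus unfolding lie_torus_def by unfold_locales blast+

sublocale lie_alg_char_0 sL br ..

abbreviation cor :: "'x \<Rightarrow> 'x \<Rightarrow> 'k" where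
  "cor \<equiv> coroot sX (\<Delta> - {0})"

lemma root_system: "root_system sX (\<Delta> - {0})"
  using lie_torus
  unfolding lie_torus_def irr_root_system0_def irreducible_root_system_def by blast

lemma finite_roots: "finite \<Delta>"
  using root_system unfolding root_system_def by simp

lemma coroot_cond: "\<alpha> \<in> \<Delta> - {0} \<Longrightarrow> coroot_cond sX (\<Delta> - {0}) \<alpha> (cor \<alpha>)"
  using root_system unfolding root_system_def coroot_def by (metis someI_ex)

lemma coroot_hom: "\<alpha> \<in> \<Delta> - {0} \<Longrightarrow> module_hom sX (*) (cor \<alpha>)"
  using coroot_cond unfolding coroot_cond_def module_hom_iff_linear by blast

lemma coroot_self: "\<alpha> \<in> \<Delta> - {0} \<Longrightarrow> cor \<alpha> \<alpha> = 2"
  using coroot_cond unfolding coroot_cond_def by blast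

lemma coroot_iterated_add:
  "\<alpha> \<in> \<Delta> - {0} \<Longrightarrow> cor \<alpha> (((+) \<delta> ^^ j) \<gamma>) = cor \<alpha> \<gamma> + of_nat j * cor \<alpha> \<delta>"
  by (induction j) (simp_all add: module_hom.add[OF coroot_hom] algebra_simps)

lemma root_of_nonzero: "x \<in> Lroot sL Lg a \<Longrightarrow> x \<noteq> 0 \<Longrightarrow> a \<in> \<Delta>"
  using lie_torus Lroot_outside unfolding lie_torus_def by blast

lemma sl2_triple:
  assumes "\<alpha> \<in> \<Delta> - {0}" and "Lg \<alpha> \<kappa> \<noteq> {0}"
  obtains e f where "Lg \<alpha> \<kappa> = range (\<lambda>c. sL c e)" and "e \<in> Lroot sL Lg \<alpha>" and "f \<in> Lroot sL Lg (- \<alpha>)"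
    and "\<And>b v. v \<in> Lroot sL Lg b \<Longrightarrow> br (br e f) v = sL (cor \<alpha> b) v"
proof -
  obtain e f where e: "e \<in> Lg \<alpha> \<kappa>" and f: "f \<in> Lg (- \<alpha>) (- \<kappa>)"
    and span: "Lg \<alpha> \<kappa> = range (\<lambda>c. sL c e)"
    and h: "\<And>b v. b \<in> zspan \<Delta> \<Longrightarrow> v \<in> Lroot sL Lg b \<Longrightarrow> br (br e f) v = sL (cor \<alpha> b) v"
    using lie_torus assms unfolding lie_torus_def by meson
  have "br (br e f) v = sL (cor \<alpha> b) v" if "v \<in> Lroot sL Lg b" for b v
    using h[OF _ that] that Lroot_outside by (cases "b \<in> zspan \<Delta>") auto
  with span e f Lg_subset_Lroot show thesis by (intro that) blast+
qed

text \<open>Otherwise every \<open>\<gamma> + j\<delta>\<close> would be a root, and these are pairwise distinct because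
  the coroot of \<open>\<alpha>\<close> separates them.\<close>
lemma ad_locally_nilpotent:
  assumes \<alpha>: "\<alpha> \<in> \<Delta> - {0}" and f: "f \<in> Lroot sL Lg \<delta>" and "cor \<alpha> \<delta> \<noteq> 0"
    and v: "v \<in> Lroot sL Lg \<gamma>"
  shows "\<exists>N. (br f ^^ N) v = 0"
proof (rule ccontr)
  assume "\<nexists>N. (br f ^^ N) v = 0"
  then have "((+) \<delta> ^^ j) \<gamma> \<in> \<Delta>" for j
    using root_of_nonzero[OF ad_power_Lroot[OF f v]] by blast
  moreover have "inj (\<lambda>j. ((+) \<delta> ^^ j) \<gamma>)"
    by (rule injI) (use coroot_iterated_add[OF \<alpha>] \<open>cor \<alpha> \<delta> \<noteq> 0\<close> in \<open>metis add_left_cancel mult_cancel_right of_nat_eq_iff\<close>)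
  ultimately have "finite (UNIV :: nat set)"
    using finite_roots by (metis finite_imageD finite_subset image_subset_iff)
  then show False by simp
qed

lemma ad_power_homogeneous_nonzero:
  assumes \<alpha>: "\<alpha> \<in> \<Delta> - {0}" and x: "x \<in> Lg \<alpha> \<kappa>" "x \<noteq> 0"
    and y: "y \<in> Lroot sL Lg \<beta>" "y \<noteq> 0" and n: "cor \<alpha> \<beta> = of_int n" "n < 0"
  shows "(br x ^^ nat (- n)) y \<noteq> 0"
proof -
  obtain e f where span: "Lg \<alpha> \<kappa> = range (\<lambda>c. sL c e)"
    and e: "e \<in> Lroot sL Lg \<alpha>" and f: "f \<in> Lroot sL Lg (- \<alpha>)"
    and h: "\<And>b v. v \<in> Lroot sL Lg b \<Longrightarrow> br (br e f) v = sL (cor \<alpha> b) v"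
    using sl2_triple[OF \<alpha>] x by blast
  obtain s where s: "x = sL s e" using span x(1) by blast
  have "cor \<alpha> (- \<alpha>) = - 2"
    using module_hom.neg[OF coroot_hom[OF \<alpha>]] coroot_self[OF \<alpha>] by simp
  then obtain N where "(br f ^^ N) y = 0"
    using ad_locally_nilpotent[OF \<alpha> f _ y(1)] by auto
  then have "(br e ^^ nat (- n)) y \<noteq> 0"
    using h[OF e] h[OF f] h[OF y(1)] coroot_self[OF \<alpha>] \<open>cor \<alpha> (- \<alpha>) = - 2\<close> n y(2)
    by (intro sl2_raising_nonzero) simp_all
  then show ?thesis
    using s x(2) by (simp add: ad_power_scale)
qed

end

theorem lemma3p5:
  fixes sX :: "'k::field_char_0 \<Rightarrow> 'x::ab_group_add \<Rightarrow> 'x"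
    and sL :: "'k \<Rightarrow> 'L::ab_group_add \<Rightarrow> 'L"
    and br :: "'L \<Rightarrow> 'L \<Rightarrow> 'L"
    and \<Delta> :: "'x set"
    and Lg :: "'x \<Rightarrow> 'l::ab_group_add \<Rightarrow> 'L set"
    and n :: int
  assumes "lie_torus sX sL br \<Delta> Lg"
    and "\<alpha> \<in> \<Delta> - {0}" and "\<beta> \<in> \<Delta> - {0}"
    and "coroot sX (\<Delta> - {0}) \<alpha> \<beta> = of_int n" and "n < 0"
    and "x\<alpha> \<in> Lroot sL Lg \<alpha>" and "x\<alpha> \<noteq> 0"
    and "y\<beta> \<in> Lroot sL Lg \<beta>" and "y\<beta> \<noteq> 0"
  shows "(br x\<alpha> ^^ nat (- n)) y\<beta> \<noteq> 0"
proof -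
  interpret lie_torus_struct sX sL br \<Delta> Lg
    by unfold_locales fact
  have "fg_free_abgroup TYPE('l)"
    using assms(1) unfolding lie_torus_def by blast
  then obtain \<kappa> \<mu> where \<kappa>: "hcomp x\<alpha> \<alpha> \<kappa> \<noteq> 0" and \<mu>: "hcomp y\<beta> \<beta> \<mu> \<noteq> 0"
    and leading: "\<And>j. (br (hcomp x\<alpha> \<alpha> \<kappa>) ^^ j) (hcomp y\<beta> \<beta> \<mu>) \<noteq> 0 \<Longrightarrow> (br x\<alpha> ^^ j) y\<beta> \<noteq> 0"
    using exists_leading_components assms(6-9) by blast
  have "hcomp y\<beta> \<beta> \<mu> \<in> Lroot sL Lg \<beta>"
    using hcomp_in_Lg Lg_subset_Lroot by blast
  from ad_power_homogeneous_nonzero[OF assms(2) hcomp_in_Lg \<kappa> this \<mu> assms(4,5)]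
  show ?thesis by (rule leading)
qed

end
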